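(* Let $0<\alpha\le\beta$ and $\theta=\beta/\alpha\ge1$. For $\mathbf w=(w_1,w_2,w_3,w_4)\in[\alpha,\beta]^4$ let $v_i=1/w_i$ and $$R_u(\mathbf w)=1-\frac14\left(\frac{v_1+v_2+v_3+v_4}{\max_{\mathbf p\in\Delta}L_{\mathbf v}(\mathbf p)}\right)^{1/3},$$ the relative loss of efficiency of the uniform design $(1/4,1/4,1/4,1/4)$, and let $R^{(u)}_{\max}=\max_{\mathbf w\in[\alpha,\beta]^4}R_u(\mathbf w)$. Then, with $\rho=\sqrt{\theta^2-\theta+1}$, $$R^{(u)}_{\max}=\begin{cases}1-\frac34\left(1+\frac3\theta\right)^{1/3}, & \theta\ge3,\\[2pt] 1-\frac18\left(2(\theta+3)(9-\theta)^2\right)^{1/3}, & \theta_*\le\theta<3,\\[2pt] 1-\frac32\left(\frac{(\theta+1)(\theta-1)^2}{(2\theta-1-\rho)(\theta-2+\rho)(\theta+1+\rho)}\right)^{1/3}, & 1<\theta<\theta_*,\\[2pt] 0, & \theta=1,\end{cases}$$ where $\theta_*\approx1.32$ is the 3rd root of $3456-5184\theta+3561\theta^2+596\theta^3-1506\theta^4+100\theta^5+\theta^6=0$.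
   Context: Setting: a $2^2$ experiment with binary response under a generalized linear model with main-effects linear predictor $\eta=\beta_0+\beta_1x_1+\beta_2x_2$; $w_i>0$ are the GLM weights $(d\mu_i/d\eta_i)^2/(\mu_i(1-\mu_i))$ at the four design points. A design is a vector $\mathbf p$ in the simplex $\Delta=\{p_i\ge0,\ \sum_ip_i=1\}$, and the $D$-criterion equals $16w_1w_2w_3w_4L_{\mathbf v}(\mathbf p)$ with $v_i=1/w_i$ and $$L_{\mathbf v}(\mathbf p)=v_4p_1p_2p_3+v_3p_1p_2p_4+v_2p_1p_3p_4+v_1p_2p_3p_4 .$$ $R_u(\mathbf w)$ equals $1-(\det(\mathbf w,\mathbf p_u)/\det(\mathbf w,\mathbf p_t))^{1/3}$, where $\mathbf p_u$ is the uniform design and $\mathbf p_t$ the $D$-optimal design for $\mathbf w$. *)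

theory Defs
  imports "HOL-Analysis.Analysis"
begin

text \<open>Designs on the four points of the 2x2 experiment are 4-tuples in the simplex.\<close>
definition simplex4 :: "(real \<times> real \<times> real \<times> real) set" where
  "simplex4 = {(p1,p2,p3,p4). p1 \<ge> 0 \<and> p2 \<ge> 0 \<and> p3 \<ge> 0 \<and> p4 \<ge> 0 \<and> p1+p2+p3+p4 = 1}"

definition Lv :: "real \<times> real \<times> real \<times> real \<Rightarrow> real \<times> real \<times> real \<times> real \<Rightarrow> real" where
  "Lv v p = (case v of (v1,v2,v3,v4) \<Rightarrow> case p of (p1,p2,p3,p4) \<Rightarrow>
      v4*p1*p2*p3 + v3*p1*p2*p4 + v2*p1*p3*p4 + v1*p2*p3*p4)"

text \<open>Relative loss of efficiency of the uniform design; v_i = 1/w_i; the max over the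
  simplex is written as a supremum (it is attained by compactness).\<close>
definition Ru :: "real \<times> real \<times> real \<times> real \<Rightarrow> real" where
  "Ru w = (case w of (w1,w2,w3,w4) \<Rightarrow>
     let v = (1/w1, 1/w2, 1/w3, 1/w4) in
     1 - (1/4) * root 3 ((1/w1 + 1/w2 + 1/w3 + 1/w4) / (SUP p\<in>simplex4. Lv v p)))"

definition box4 :: "real \<Rightarrow> real \<Rightarrow> (real \<times> real \<times> real \<times> real) set" where
  "box4 a b = {a..b} \<times> {a..b} \<times> {a..b} \<times> {a..b}"

definition sextic :: "real \<Rightarrow> real" where
  "sextic t = 3456 - 5184*t + 3561*t^2 + 596*t^3 - 1506*t^4 + 100*t^5 + t^6"

definition theta_star :: real where
  "theta_star = (THE r. sextic r = 0 \<and> card {x. sextic x = 0 \<and> x < r} = 2)"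

definition Rmax_formula :: "real \<Rightarrow> real" where
  "Rmax_formula \<theta> =
    (if \<theta> \<ge> 3 then 1 - (3/4) * root 3 (1 + 3/\<theta>)
     else if theta_star \<le> \<theta> then 1 - (1/8) * root 3 (2*(\<theta>+3)*(9-\<theta>)^2)
     else if 1 < \<theta> then
       (let \<rho> = sqrt (\<theta>^2 - \<theta> + 1) in
        1 - (3/2) * root 3 ((\<theta>+1)*(\<theta>-1)^2 /
              ((2*\<theta> - 1 - \<rho>) * (\<theta> - 2 + \<rho>) * (\<theta> + 1 + \<rho>))))
     else 0)"

end

theory Submission
  imports Defs
begin

text \<open>
  For a fixed design p, K L_v(p) - (v_1 + v_2 + v_3 + v_4) is affine in each v_i, so the largest K
  with K max_p L_v(p) \<le> v_1 + v_2 + v_3 + v_4 on a box [a, \<theta> a]^4 is decided at the vertices of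
  the box.  Up to scaling and permutation these are (\<theta>,1,1,1), (1,\<theta>,\<theta>,\<theta>) = \<theta> (1/\<theta>,1,1,1),
  (\<theta>,\<theta>,1,1) and (1,1,1,1).  By AM-GM, L_v only grows when the weights of the heavy points and
  those of the light points are averaged, which leaves two one-parameter families of cubics.  Their
  maxima give a one-heavy and a two-heavy cap on K, and the optimal K is the smaller of the two.
  The caps cross exactly at a zero of the sextic, which is where \<theta>_* comes from.
\<close>

section \<open>Vertices of the box and symmetric designs\<close>

lemma Lv_scale: "Lv (c * v1, c * v2, c * v3, c * v4) p = c * Lv (v1, v2, v3, v4) p"
  by (cases p) (simp add: Lv_def algebra_simps)

lemma mult_le_at_endpoint:
  fixes a b z d :: real
  assumes "a \<le> z" "z \<le> b"
  obtains u where "u \<in> {a, b}" "z * d \<le> u * d"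
proof (cases "0 \<le> d")
  case True
  then have "z * d \<le> b * d" using assms by (intro mult_right_mono) auto
  then show ?thesis using that by blast
next
  case False
  then have "z * d \<le> a * d" using assms by (intro mult_right_mono_neg) auto
  then show ?thesis using that by blast
qed

lemma Lv_le_from_vertices:
  assumes vertices: "\<And>e1 e2 e3 e4. e1 \<in> {l, h} \<Longrightarrow> e2 \<in> {l, h} \<Longrightarrow> e3 \<in> {l, h} \<Longrightarrow> e4 \<in> {l, h}
      \<Longrightarrow> K * Lv (e1, e2, e3, e4) p \<le> e1 + e2 + e3 + e4"
    and v: "v1 \<in> {l..h}" "v2 \<in> {l..h}" "v3 \<in> {l..h}" "v4 \<in> {l..h}"
  shows "K * Lv (v1, v2, v3, v4) p \<le> v1 + v2 + v3 + v4"
proof -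
  obtain p1 p2 p3 p4 where p: "p = (p1, p2, p3, p4)"
    by (cases p) auto
  define c1 c2 c3 c4 where "c1 = K * (p2 * p3 * p4) - 1" and "c2 = K * (p1 * p3 * p4) - 1"
    and "c3 = K * (p1 * p2 * p4) - 1" and "c4 = K * (p1 * p2 * p3) - 1"
  have affine: "K * Lv (x1, x2, x3, x4) p - (x1 + x2 + x3 + x4) = x1 * c1 + x2 * c2 + x3 * c3 + x4 * c4"
    for x1 x2 x3 x4
    unfolding p Lv_def c1_def c2_def c3_def c4_def by (simp add: algebra_simps)
  obtain u1 u2 u3 u4 where u: "u1 \<in> {l, h}" "u2 \<in> {l, h}" "u3 \<in> {l, h}" "u4 \<in> {l, h}"
    and le: "v1 * c1 \<le> u1 * c1" "v2 * c2 \<le> u2 * c2" "v3 * c3 \<le> u3 * c3" "v4 * c4 \<le> u4 * c4"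
    using v by (metis atLeastAtMost_iff mult_le_at_endpoint)
  have "K * Lv (v1, v2, v3, v4) p - (v1 + v2 + v3 + v4)
      \<le> K * Lv (u1, u2, u3, u4) p - (u1 + u2 + u3 + u4)"
    unfolding affine using le by linarith
  also have "\<dots> \<le> 0"
    using vertices[OF u] by simp
  finally show ?thesis by simp
qed

lemma prod3_le_mean_cube:
  fixes x y z :: real
  assumes "0 \<le> x" "0 \<le> y" "0 \<le> z"
  shows "x * y * z \<le> ((x + y + z) / 3) ^ 3"
proof -
  have "4 * (y * z) \<le> (y + z)^2"
    using sum_squares_bound[of y z] by (simp add: power2_eq_square algebra_simps)
  then have "x * (4 * (y * z)) \<le> x * (y + z)^2"
    using assms(1) by (rule mult_left_mono)
  moreover have "27 * (x * (y + z)^2 / 4) \<le> (x + y + z)^3"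
  proof -
    have "(x + y + z)^3 - 27 * (x * (y + z)^2 / 4) = (2*x - (y + z))^2 * (x + 4 * (y + z)) / 4"
      by (simp add: field_simps) algebra
    moreover have "0 \<le> (2*x - (y + z))^2 * (x + 4 * (y + z)) / 4"
      using assms by simp
    ultimately show ?thesis by linarith
  qed
  ultimately show ?thesis by (simp add: power_divide)
qed

lemma sym2_le_mean_square:
  fixes x y z :: real
  shows "x * y + x * z + y * z \<le> 3 * ((x + y + z) / 3)^2"
proof -
  have "3 * ((x + y + z) / 3)^2 - (x * y + x * z + y * z) = ((x - y)^2 + (y - z)^2 + (z - x)^2) / 6"
    by (simp add: field_simps) algebra
  moreover have "0 \<le> ((x - y)^2 + (y - z)^2 + (z - x)^2) / 6"
    by simp
  ultimately show ?thesis by linarith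
qed

lemma Lv_one_heavy_le_avg:
  assumes "0 \<le> s" "0 \<le> p1" "0 \<le> p2" "0 \<le> p3" "0 \<le> p4"
  defines "q \<equiv> (p2 + p3 + p4) / 3"
  shows "Lv (s, 1, 1, 1) (p1, p2, p3, p4) \<le> Lv (s, 1, 1, 1) (p1, q, q, q)"
proof -
  have "s * (p2 * p3 * p4) \<le> s * q^3"
    unfolding q_def using assms by (intro mult_left_mono prod3_le_mean_cube) auto
  moreover have "p1 * (p2 * p3 + p2 * p4 + p3 * p4) \<le> p1 * (3 * q^2)"
    unfolding q_def using assms by (intro mult_left_mono sym2_le_mean_square) auto
  ultimately show ?thesis
    by (simp add: Lv_def algebra_simps power2_eq_square power3_eq_cube)
qed

lemma Lv_two_heavy_le_avg:
  assumes "0 \<le> \<theta>" "0 \<le> p1" "0 \<le> p2" "0 \<le> p3" "0 \<le> p4"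
  defines "x \<equiv> (p1 + p2) / 2" and "y \<equiv> (p3 + p4) / 2"
  shows "Lv (\<theta>, \<theta>, 1, 1) (p1, p2, p3, p4) \<le> Lv (\<theta>, \<theta>, 1, 1) (x, x, y, y)"
proof -
  have "p1 * p2 \<le> x^2" "p3 * p4 \<le> y^2"
    unfolding x_def y_def using sum_squares_bound[of p1 p2] sum_squares_bound[of p3 p4]
    by (simp_all add: power2_eq_square algebra_simps)
  then have "(p1 * p2) * (2 * y) \<le> x^2 * (2 * y)" "(\<theta> * (2 * x)) * (p3 * p4) \<le> (\<theta> * (2 * x)) * y^2"
    using assms by (intro mult_right_mono mult_left_mono; simp add: x_def y_def)+
  moreover have "Lv (\<theta>, \<theta>, 1, 1) (p1, p2, p3, p4) = (p1 * p2) * (2 * y) + (\<theta> * (2 * x)) * (p3 * p4)"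
    unfolding x_def y_def Lv_def by (simp add: field_simps)
  moreover have "Lv (\<theta>, \<theta>, 1, 1) (x, x, y, y) = x^2 * (2 * y) + (\<theta> * (2 * x)) * y^2"
    unfolding Lv_def by (simp add: algebra_simps power2_eq_square)
  ultimately show ?thesis by linarith
qed

lemma Lv_one_heavy_sym: "Lv (s, 1, 1, 1) (1 - 3*q, q, q, q) = s * q^3 + 3 * q^2 * (1 - 3*q)"
  by (simp add: Lv_def algebra_simps power2_eq_square power3_eq_cube)

lemma Lv_two_heavy_sym:
  "Lv (\<theta>, \<theta>, 1, 1) ((1 - y)/2, (1 - y)/2, y/2, y/2) = y * (1 - y) * (\<theta> * y + 1 - y) / 4"
  by (simp add: Lv_def field_simps)

section \<open>The one-heavy and the two-heavy cap\<close>

text \<open>The largest K with K L_{(s,1,1,1)}(p) \<le> s + 3 on the simplex; the maximising design is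
  (1 - 3q, q, q, q) with q = 2/(9 - s) for s \<le> 3 and q = 1/3 otherwise.\<close>
definition one_heavy_cap :: "real \<Rightarrow> real" where
  "one_heavy_cap s = (if s \<le> 3 then (s + 3) * (9 - s)^2 / 4 else 27 * (s + 3) / s)"

lemma one_heavy_cap_pos: "0 \<le> s \<Longrightarrow> 0 < one_heavy_cap s"
  by (simp add: one_heavy_cap_def)

lemma one_heavy_cubic_le:
  fixes s q :: real
  assumes "s \<le> 9" "0 \<le> q"
  shows "(9 - s)^2 * (s * q^3 + 3 * q^2 * (1 - 3*q)) \<le> 4"
proof -
  have "4 - (9 - s)^2 * (s * q^3 + 3 * q^2 * (1 - 3*q)) = ((9 - s) * q - 2)^2 * ((9 - s) * q + 1)"
    by algebra
  moreover have "0 \<le> ((9 - s) * q - 2)^2 * ((9 - s) * q + 1)"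
    using assms by simp
  ultimately show ?thesis by linarith
qed

lemma one_heavy_cubic_le_large:
  fixes s q :: real
  assumes "3 \<le> s" "0 \<le> q" "q \<le> 1/3"
  shows "27 * (s * q^3 + 3 * q^2 * (1 - 3*q)) \<le> s"
proof -
  have "s - 27 * (s * q^3 + 3 * q^2 * (1 - 3*q))
      = (1 - 3*q) * ((s - 3) * (1 + 3*q + 9*q^2) + 3 * (1 + 6*q) * (1 - 3*q))"
    by algebra
  moreover have "0 \<le> (1 - 3*q) * ((s - 3) * (1 + 3*q + 9*q^2) + 3 * (1 + 6*q) * (1 - 3*q))"
    using assms by (intro mult_nonneg_nonneg add_nonneg_nonneg) auto
  ultimately show ?thesis by linarith
qed

lemma one_heavy_cap_bound:
  assumes "0 \<le> s" "0 \<le> K" "K \<le> one_heavy_cap s" "0 \<le> q" "q \<le> 1/3"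
  shows "K * Lv (s, 1, 1, 1) (1 - 3*q, q, q, q) \<le> s + 3"
proof -
  define g where "g = s * q^3 + 3 * q^2 * (1 - 3*q)"
  have "0 \<le> g"
    unfolding g_def using assms by (intro add_nonneg_nonneg mult_nonneg_nonneg) auto
  have "one_heavy_cap s * g \<le> s + 3"
  proof (cases "s \<le> 3")
    case True
    then have "(s + 3) / 4 * ((9 - s)^2 * g) \<le> (s + 3) / 4 * 4"
      using assms unfolding g_def by (intro mult_left_mono one_heavy_cubic_le) auto
    then show ?thesis
      using True by (simp add: one_heavy_cap_def)
  next
    case False
    then have "(s + 3) / s * (27 * g) \<le> (s + 3) / s * s"
      using assms unfolding g_def by (intro mult_left_mono one_heavy_cubic_le_large) auto
    moreover have "one_heavy_cap s * g = (s + 3) / s * (27 * g)"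
      using False by (simp add: one_heavy_cap_def)
    ultimately show ?thesis
      using False by simp
  qed
  moreover have "K * g \<le> one_heavy_cap s * g"
    using assms(3) \<open>0 \<le> g\<close> by (rule mult_right_mono)
  ultimately show ?thesis
    unfolding Lv_one_heavy_sym g_def by linarith
qed

lemma Lv_one_heavy_le_cap:
  assumes "0 \<le> s" "0 \<le> K" "K \<le> one_heavy_cap s" "(x1, x2, x3, x4) \<in> simplex4"
  shows "K * Lv (s, 1, 1, 1) (x1, x2, x3, x4) \<le> s + 3"
proof -
  define q where "q = (x2 + x3 + x4) / 3"
  have x: "0 \<le> x1" "0 \<le> x2" "0 \<le> x3" "0 \<le> x4" "x1 = 1 - 3*q"
    using assms(4) unfolding simplex4_def q_def by (auto simp: field_simps)
  then have "Lv (s, 1, 1, 1) (x1, x2, x3, x4) \<le> Lv (s, 1, 1, 1) (x1, q, q, q)"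
    unfolding q_def using assms(1) by (intro Lv_one_heavy_le_avg) auto
  then have "K * Lv (s, 1, 1, 1) (x1, x2, x3, x4) \<le> K * Lv (s, 1, 1, 1) (1 - 3*q, q, q, q)"
    unfolding x(5) using assms(2) by (rule mult_left_mono)
  also have "\<dots> \<le> s + 3"
    using assms x by (intro one_heavy_cap_bound) (auto simp: q_def)
  finally show ?thesis .
qed

lemma one_heavy_cap_attained:
  assumes "0 \<le> s"
  obtains q where "0 \<le> q" "q \<le> 1/3" "one_heavy_cap s * Lv (s, 1, 1, 1) (1 - 3*q, q, q, q) = s + 3"
proof (cases "s \<le> 3")
  case True
  define q where "q = 2 / (9 - s)"
  have "q * (9 - s) = 2" "0 \<le> q" "q \<le> 1/3"
    using True by (simp_all add: q_def field_simps)
  have "(9 - s)^2 * Lv (s, 1, 1, 1) (1 - 3*q, q, q, q)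
      = s * q * (q * (9 - s))^2 + 3 * (q * (9 - s))^2 * (1 - 3*q)"
    unfolding Lv_one_heavy_sym by algebra
  also have "\<dots> = 4 * s * q + 12 * (1 - 3*q)"
    unfolding \<open>q * (9 - s) = 2\<close> by simp
  also have "\<dots> = 12 - 4 * (q * (9 - s))"
    by algebra
  finally have "(s + 3) / 4 * ((9 - s)^2 * Lv (s, 1, 1, 1) (1 - 3*q, q, q, q)) = s + 3"
    unfolding \<open>q * (9 - s) = 2\<close> by simp
  then have "one_heavy_cap s * Lv (s, 1, 1, 1) (1 - 3*q, q, q, q) = s + 3"
    using True by (simp add: one_heavy_cap_def)
  with \<open>0 \<le> q\<close> \<open>q \<le> 1/3\<close> show ?thesis
    using that by blast
next
  case False
  show ?thesis
  proof (rule that[of "1/3"])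
    show "one_heavy_cap s * Lv (s, 1, 1, 1) (1 - 3 * (1/3), 1/3, 1/3, 1/3) = s + 3"
      using False unfolding Lv_one_heavy_sym one_heavy_cap_def by (simp add: field_simps)
  qed simp_all
qed

lemma one_heavy_cap_le_64:
  assumes "0 \<le> s"
  shows "one_heavy_cap s \<le> 64"
proof (cases "s \<le> 3")
  case True
  have "256 - (s + 3) * (9 - s)^2 = (s - 1)^2 * (13 - s)"
    by algebra
  moreover have "0 \<le> (s - 1)^2 * (13 - s)"
    using True by simp
  ultimately have "(s + 3) * (9 - s)^2 \<le> 256"
    by linarith
  then show ?thesis
    using True by (simp add: one_heavy_cap_def)
next
  case False
  then show ?thesis
    by (simp add: one_heavy_cap_def field_simps)
qed

lemma one_heavy_cap_inverse:
  assumes "1 \<le> \<theta>"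
  shows "one_heavy_cap (1/\<theta>) = (3*\<theta> + 1) * (9*\<theta> - 1)^2 / (4 * \<theta>^3)"
  using assms by (simp add: one_heavy_cap_def field_simps power2_eq_square power3_eq_cube)

lemma one_heavy_cap_le_inverse:
  assumes "1 \<le> \<theta>"
  shows "one_heavy_cap \<theta> \<le> one_heavy_cap (1/\<theta>)"
proof (cases "\<theta> \<le> 3")
  case True
  have "(3*\<theta> + 1) * (9*\<theta> - 1)^2 - \<theta>^3 * ((\<theta> + 3) * (9 - \<theta>)^2)
      = (\<theta> - 1)^3 * (12*\<theta> - 1 + \<theta>^2 * (12 - \<theta>))"
    by algebra
  moreover have "0 \<le> (\<theta> - 1)^3 * (12*\<theta> - 1 + \<theta>^2 * (12 - \<theta>))"
    using True assms by (intro mult_nonneg_nonneg add_nonneg_nonneg) auto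
  ultimately have "\<theta>^3 * ((\<theta> + 3) * (9 - \<theta>)^2) \<le> (3*\<theta> + 1) * (9*\<theta> - 1)^2"
    by linarith
  then show ?thesis
    using True assms unfolding one_heavy_cap_inverse[OF assms] by (simp add: one_heavy_cap_def field_simps)
next
  case False
  have "(3*\<theta> + 1) * (9*\<theta> - 1)^2 - 108 * \<theta>^2 * (\<theta> + 3)
      = 928 + 1848 * (\<theta> - 3) + 918 * (\<theta> - 3)^2 + 135 * (\<theta> - 3)^3"
    by algebra
  moreover have "0 \<le> 1848 * (\<theta> - 3) + 918 * (\<theta> - 3)^2 + 135 * (\<theta> - 3)^3"
    using False by (intro add_nonneg_nonneg mult_nonneg_nonneg zero_le_power) auto
  ultimately have "108 * \<theta>^2 * (\<theta> + 3) \<le> (3*\<theta> + 1) * (9*\<theta> - 1)^2"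
    by linarith
  then have "108 * \<theta>^2 * (\<theta> + 3) / (4 * \<theta>^3) \<le> (3*\<theta> + 1) * (9*\<theta> - 1)^2 / (4 * \<theta>^3)"
    by (rule divide_right_mono) (use False in simp)
  moreover have "108 * \<theta>^2 * (\<theta> + 3) / (4 * \<theta>^3) = one_heavy_cap \<theta>"
    using False by (simp add: one_heavy_cap_def power2_eq_square power3_eq_cube field_simps)
  ultimately show ?thesis
    unfolding one_heavy_cap_inverse[OF assms] by simp
qed

text \<open>The largest K with K L_{(\<theta>,\<theta>,1,1)}(p) \<le> 2\<theta> + 2 on the simplex.  With \<rho> = sqrt (\<theta>^2 - \<theta> + 1)
  and u = \<theta> + \<rho> one has \<theta> = (u^2 - 1)/(2u - 1), which makes the problem rational in u; the
  maximising design puts total weight (2u - 1)/(3u) on the two light points.\<close>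
definition two_heavy_cap :: "real \<Rightarrow> real" where
  "two_heavy_cap \<theta> = (let u = \<theta> + sqrt (\<theta>^2 - \<theta> + 1) in 216 * u^2 * (\<theta> + 1) / ((2*u - 1) * (u + 1)^2))"

lemma two_heavy_param:
  assumes "1 \<le> \<theta>"
  defines "u \<equiv> \<theta> + sqrt (\<theta>^2 - \<theta> + 1)"
  shows "2 \<le> u" "\<theta> * (2*u - 1) = u^2 - 1"
proof -
  have "1 \<le> \<theta>^2 - \<theta> + 1"
    using assms by (simp add: power2_eq_square)
  then have "1 \<le> sqrt (\<theta>^2 - \<theta> + 1)" and r2: "(sqrt (\<theta>^2 - \<theta> + 1))^2 = \<theta>^2 - \<theta> + 1"
    by simp_all
  then show "2 \<le> u"
    using assms unfolding u_def by linarith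
  show "\<theta> * (2*u - 1) = u^2 - 1"
    unfolding u_def using r2 by algebra
qed

lemma two_heavy_cap_pos:
  assumes "1 \<le> \<theta>"
  shows "0 < two_heavy_cap \<theta>"
  using two_heavy_param[OF assms] assms unfolding two_heavy_cap_def Let_def
  by (intro divide_pos_pos mult_pos_pos) auto

lemma two_heavy_cubic_le:
  fixes \<theta> u y :: real
  assumes "2 \<le> u" "\<theta> * (2*u - 1) = u^2 - 1" "0 \<le> y"
  shows "27 * u^2 * (y * (1 - y) * (\<theta> * y + 1 - y)) \<le> (2*u - 1) * (u + 1)^2"
proof -
  have "(2*u - 1) * (27 * u^2 * (y * (1 - y) * (\<theta> * y + 1 - y)))
      = (2*u - 1)^2 * (u + 1)^2 - (3*u*y - (2*u - 1))^2 * (3*u*(u - 2)*y + (u + 1)^2)"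
    using assms(2) by algebra
  moreover have "0 \<le> (3*u*y - (2*u - 1))^2 * (3*u*(u - 2)*y + (u + 1)^2)"
    using assms(1,3) by (intro mult_nonneg_nonneg add_nonneg_nonneg) auto
  ultimately have "(2*u - 1) * (27 * u^2 * (y * (1 - y) * (\<theta> * y + 1 - y))) \<le> (2*u - 1)^2 * (u + 1)^2"
    by linarith
  also have "\<dots> = (2*u - 1) * ((2*u - 1) * (u + 1)^2)"
    by (simp add: power2_eq_square)
  finally show ?thesis
    using assms(1) by (simp add: mult_le_cancel_left)
qed

lemma two_heavy_cap_bound:
  assumes "1 \<le> \<theta>" "0 \<le> K" "K \<le> two_heavy_cap \<theta>" "0 \<le> y" "y \<le> 1"
  shows "K * Lv (\<theta>, \<theta>, 1, 1) ((1 - y)/2, (1 - y)/2, y/2, y/2) \<le> 2*\<theta> + 2"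
proof -
  define u where "u = \<theta> + sqrt (\<theta>^2 - \<theta> + 1)"
  have u: "2 \<le> u" "\<theta> * (2*u - 1) = u^2 - 1"
    using two_heavy_param[OF assms(1)] unfolding u_def by auto
  define W where "W = y * (1 - y) * (\<theta> * y + 1 - y)"
  have "0 \<le> \<theta> * y + 1 - y"
    using assms mult_right_mono[of 1 \<theta> y] by simp
  then have "0 \<le> W"
    unfolding W_def using assms by simp
  have den: "0 < (2*u - 1) * (u + 1)^2"
    using u(1) by simp
  have "K * (W / 4) \<le> two_heavy_cap \<theta> * (W / 4)"
    using assms(3) \<open>0 \<le> W\<close> by (simp add: mult_right_mono)
  also have "\<dots> = 2 * (\<theta> + 1) * (27 * u^2 * W) / ((2*u - 1) * (u + 1)^2)"
    unfolding two_heavy_cap_def Let_def u_def[symmetric] by simp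
  also have "\<dots> \<le> 2 * (\<theta> + 1) * ((2*u - 1) * (u + 1)^2) / ((2*u - 1) * (u + 1)^2)"
    unfolding W_def using u assms den by (intro divide_right_mono mult_left_mono two_heavy_cubic_le) auto
  also have "\<dots> = 2 * (\<theta> + 1)"
    by (rule nonzero_mult_div_cancel_right) (use u(1) in simp)
  finally show ?thesis
    unfolding Lv_two_heavy_sym W_def by simp
qed

lemma Lv_two_heavy_le_cap:
  assumes "1 \<le> \<theta>" "0 \<le> K" "K \<le> two_heavy_cap \<theta>" "(x1, x2, x3, x4) \<in> simplex4"
  shows "K * Lv (\<theta>, \<theta>, 1, 1) (x1, x2, x3, x4) \<le> 2*\<theta> + 2"
proof -
  define y where "y = x3 + x4"
  have x: "0 \<le> x1" "0 \<le> x2" "0 \<le> x3" "0 \<le> x4" "x1 + x2 = 1 - y"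
    using assms(4) unfolding simplex4_def y_def by auto
  then have "Lv (\<theta>, \<theta>, 1, 1) (x1, x2, x3, x4)
      \<le> Lv (\<theta>, \<theta>, 1, 1) ((x1 + x2)/2, (x1 + x2)/2, (x3 + x4)/2, (x3 + x4)/2)"
    using assms(1) by (intro Lv_two_heavy_le_avg) auto
  then have "K * Lv (\<theta>, \<theta>, 1, 1) (x1, x2, x3, x4)
      \<le> K * Lv (\<theta>, \<theta>, 1, 1) ((1 - y)/2, (1 - y)/2, y/2, y/2)"
    unfolding x(5) y_def[symmetric] using assms(2) by (rule mult_left_mono)
  also have "\<dots> \<le> 2*\<theta> + 2"
    using assms x by (intro two_heavy_cap_bound) (auto simp: y_def)
  finally show ?thesis .
qed

lemma two_heavy_cap_attained:
  assumes "1 \<le> \<theta>"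
  obtains y where "0 \<le> y" "y \<le> 1"
    "two_heavy_cap \<theta> * Lv (\<theta>, \<theta>, 1, 1) ((1 - y)/2, (1 - y)/2, y/2, y/2) = 2*\<theta> + 2"
proof -
  define u where "u = \<theta> + sqrt (\<theta>^2 - \<theta> + 1)"
  have u: "2 \<le> u" "\<theta> * (2*u - 1) = u^2 - 1"
    using two_heavy_param[OF assms(1)] unfolding u_def by auto
  define y where "y = (2*u - 1) / (3*u)"
  have "0 \<le> y" "y \<le> 1" and y1: "1 - y = (u + 1) / (3*u)"
    using u(1) by (simp_all add: y_def field_simps)
  have "\<theta> * y + 1 - y = (\<theta> * (2*u - 1) + u + 1) / (3*u)"
    using u(1) by (simp add: y_def field_simps)
  also have "\<dots> = (u + 1) / 3"
    unfolding u(2) using u(1) by (simp add: field_simps power2_eq_square)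
  finally have y2: "\<theta> * y + 1 - y = (u + 1) / 3" .
  have L: "Lv (\<theta>, \<theta>, 1, 1) ((1 - y)/2, (1 - y)/2, y/2, y/2) = (2*u - 1) * (u + 1)^2 / (108 * u^2)"
    unfolding Lv_two_heavy_sym unfolding y2 y1 using u(1) by (simp add: y_def field_simps power2_eq_square)
  have "two_heavy_cap \<theta> * Lv (\<theta>, \<theta>, 1, 1) ((1 - y)/2, (1 - y)/2, y/2, y/2)
      = 216 * u^2 * (\<theta> + 1) / ((2*u - 1) * (u + 1)^2) * ((2*u - 1) * (u + 1)^2 / (108 * u^2))"
    unfolding L two_heavy_cap_def Let_def u_def[symmetric] ..
  also have "\<dots> = 2*\<theta> + 2"
    using u(1) by (simp add: field_simps)
  finally show ?thesis
    using that \<open>0 \<le> y\<close> \<open>y \<le> 1\<close> by blast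
qed

lemma Lv_corner_le:
  assumes "1 \<le> \<theta>" "0 \<le> K" "K \<le> one_heavy_cap 1" "K \<le> one_heavy_cap \<theta>" "K \<le> one_heavy_cap (1/\<theta>)"
    "K \<le> two_heavy_cap \<theta>"
    and e: "e1 \<in> {1, \<theta>}" "e2 \<in> {1, \<theta>}" "e3 \<in> {1, \<theta>}" "e4 \<in> {1, \<theta>}"
    and p: "p \<in> simplex4"
  shows "K * Lv (e1, e2, e3, e4) p \<le> e1 + e2 + e3 + e4"
proof -
  have one: "K * Lv (s, 1, 1, 1) x \<le> s + 3" if "s \<in> {1, \<theta>, 1/\<theta>}" "x \<in> simplex4" for s x
    using that assms(1-5) Lv_one_heavy_le_cap[of s K] by (cases x) auto
  have two: "K * Lv (\<theta>, \<theta>, 1, 1) x \<le> 2*\<theta> + 2" if "x \<in> simplex4" for x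
    using that assms(1,2,6) Lv_two_heavy_le_cap[of \<theta> K] by (cases x) auto
  \<comment> \<open>Three heavy points are one heavy point of weight 1/\<theta>, rescaled by \<theta>.\<close>
  have three: "K * Lv (1, \<theta>, \<theta>, \<theta>) x \<le> 3*\<theta> + 1" if "x \<in> simplex4" for x
  proof -
    have "\<theta> * (K * Lv (1/\<theta>, 1, 1, 1) x) \<le> \<theta> * (1/\<theta> + 3)"
      using that assms(1) by (intro mult_left_mono one) auto
    then show ?thesis
      using assms(1) Lv_scale[of \<theta> "1/\<theta>" 1 1 1 x] by (simp add: algebra_simps)
  qed
  have four: "K * Lv (\<theta>, \<theta>, \<theta>, \<theta>) x \<le> 4*\<theta>" if "x \<in> simplex4" for x
  proof -
    have "\<theta> * (K * Lv (1, 1, 1, 1) x) \<le> \<theta> * (1 + 3)"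
      using that assms(1) by (intro mult_left_mono one) auto
    then show ?thesis
      using Lv_scale[of \<theta> 1 1 1 1 x] by (simp add: algebra_simps)
  qed
  obtain p1 p2 p3 p4 where p': "p = (p1, p2, p3, p4)"
    by (cases p) auto
  \<comment> \<open>Every vertex is one of the four patterns up to a permutation of the coordinates.\<close>
  show ?thesis
    unfolding p'
    using e p[unfolded p'] one[of 1 "(p1, p2, p3, p4)"]
      one[of \<theta> "(p1, p2, p3, p4)"] one[of \<theta> "(p2, p1, p3, p4)"]
      one[of \<theta> "(p3, p1, p2, p4)"] one[of \<theta> "(p4, p1, p2, p3)"]
      two[of "(p1, p2, p3, p4)"] two[of "(p1, p3, p2, p4)"] two[of "(p1, p4, p2, p3)"]
      two[of "(p2, p3, p1, p4)"] two[of "(p2, p4, p1, p3)"] two[of "(p3, p4, p1, p2)"]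
      three[of "(p1, p2, p3, p4)"] three[of "(p2, p1, p3, p4)"]
      three[of "(p3, p1, p2, p4)"] three[of "(p4, p1, p2, p3)"] four[of "(p1, p2, p3, p4)"]
    by (auto simp: Lv_def simplex4_def algebra_simps)
qed

section \<open>The sextic and its third zero\<close>

definition sextic_deriv :: "real \<Rightarrow> real" where
  "sextic_deriv x = -5184 + 7122*x + 1788*x^2 - 6024*x^3 + 500*x^4 + 6*x^5"

lemma has_real_derivative_sextic: "(sextic has_real_derivative sextic_deriv x) (at x)"
  unfolding sextic_def sextic_deriv_def by (rule derivative_eq_intros refl | simp)+

text \<open>Each sign condition on an interval [lo, lo + L] is certified by a Bernstein expansion:
  with x = lo + L t and 0 \<le> t \<le> 1, the polynomial is a positive constant plus a combination of
  the t^i (1 - t)^(n-i) with nonnegative coefficients.\<close>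

lemma sextic_deriv_neg_far:
  assumes "x \<le> -100"
  shows "sextic_deriv x < 0"
proof -
  obtain t where t: "0 \<le> t" "x = -100 - t"
    using assms by (intro that[of "-100 - x"]) auto
  have "- sextic_deriv (-100 - t) = 3958837384 + (818929522 * t + 28191012 * t^2 + 393976 * t^3
      + 2500 * t^4 + 6 * t^5)"
    unfolding sextic_deriv_def by algebra
  moreover have "0 \<le> 818929522 * t + 28191012 * t^2 + 393976 * t^3 + 2500 * t^4 + 6 * t^5"
    using t by (intro add_nonneg_nonneg mult_nonneg_nonneg zero_le_power) auto
  ultimately show ?thesis unfolding t(2) by linarith
qed

lemma sextic_neg_mid:
  assumes "-100 \<le> x" "x \<le> -2"
  shows "sextic x < 0"
proof -
  obtain t where t: "0 \<le> t" "t \<le> 1" "x = 98 * t - 100"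
    using assms by (intro that[of "(x + 100) / 98"]) (auto simp: field_simps)
  have "- sextic (98 * t - 100) = 3932 + (151159864212 * (1 - t)^6 + 1294925248904 * t * (1 - t)^5
      + 274728716696 * t^2 * (1 - t)^4 + 17244650752 * t^3 * (1 - t)^3
      + 443222836 * t^4 * (1 - t)^2 + 4284952 * t^5 * (1 - t))"
    unfolding sextic_def by algebra
  moreover have "0 \<le> 151159864212 * (1 - t)^6 + 1294925248904 * t * (1 - t)^5
      + 274728716696 * t^2 * (1 - t)^4 + 17244650752 * t^3 * (1 - t)^3
      + 443222836 * t^4 * (1 - t)^2 + 4284952 * t^5 * (1 - t)"
    using t by (intro add_nonneg_nonneg mult_nonneg_nonneg zero_le_power) auto
  ultimately show ?thesis unfolding t(3) by linarith
qed

lemma sextic_deriv_pos_mid: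
  assumes "-2 \<le> x" "x \<le> -3/2"
  shows "0 < sextic_deriv x"
proof -
  obtain t where t: "0 \<le> t" "t \<le> 1" "2 * x = t - 4"
    using assms by (intro that[of "2 * x + 4"]) auto
  have "16 * sextic_deriv x = 175563 + (524021 * (1 - t)^5 + 1917401 * t * (1 - t)^4
      + 2627202 * t^2 * (1 - t)^3 + 1597842 * t^3 * (1 - t)^2 + 364017 * t^4 * (1 - t))"
    using t(3) unfolding sextic_deriv_def by algebra
  moreover have "0 \<le> 524021 * (1 - t)^5 + 1917401 * t * (1 - t)^4
      + 2627202 * t^2 * (1 - t)^3 + 1597842 * t^3 * (1 - t)^2 + 364017 * t^4 * (1 - t)"
    using t by (intro add_nonneg_nonneg mult_nonneg_nonneg zero_le_power) auto
  ultimately show ?thesis by linarith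
qed

lemma sextic_pos_mid:
  assumes "-3/2 \<le> x" "x \<le> 1"
  shows "0 < sextic x"
proof -
  obtain t where t: "0 \<le> t" "t \<le> 1" "2 * x = 5 * t - 3"
    using assms by (intro that[of "(2 * x + 3) / 5"]) (auto simp: field_simps)
  have "64 * sextic x = 65536 + (501545 * (1 - t)^6 + 4764900 * t * (1 - t)^5
      + 7200900 * t^2 * (1 - t)^4 + 3000000 * t^3 * (1 - t)^3 + 364800 * t^4 * (1 - t)^2
      + 286720 * t^5 * (1 - t))"
    using t(3) unfolding sextic_def by algebra
  moreover have "0 \<le> 501545 * (1 - t)^6 + 4764900 * t * (1 - t)^5
      + 7200900 * t^2 * (1 - t)^4 + 3000000 * t^3 * (1 - t)^3 + 364800 * t^4 * (1 - t)^2
      + 286720 * t^5 * (1 - t)"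
    using t by (intro add_nonneg_nonneg mult_nonneg_nonneg zero_le_power) auto
  ultimately show ?thesis by linarith
qed

lemma sextic_deriv_neg_1_3:
  assumes "1 \<le> x" "x \<le> 3"
  shows "sextic_deriv x < 0"
proof -
  obtain t where t: "0 \<le> t" "t \<le> 1" "x = 2 * t + 1"
    using assms by (intro that[of "(x - 1) / 2"]) (auto simp: field_simps)
  have "- sextic_deriv (2 * t + 1) = 1792 + (10688 * t * (1 - t)^4 + 95648 * t^2 * (1 - t)^3
      + 254528 * t^3 * (1 - t)^2 + 256384 * t^4 * (1 - t) + 86624 * t^5)"
    unfolding sextic_deriv_def by algebra
  moreover have "0 \<le> 10688 * t * (1 - t)^4 + 95648 * t^2 * (1 - t)^3
      + 254528 * t^3 * (1 - t)^2 + 256384 * t^4 * (1 - t) + 86624 * t^5"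
    using t by (intro add_nonneg_nonneg mult_nonneg_nonneg zero_le_power) auto
  ultimately show ?thesis unfolding t(3) by linarith
qed

lemma sextic_strict_antimono:
  assumes "x < y" "\<And>z. x \<le> z \<Longrightarrow> z \<le> y \<Longrightarrow> sextic_deriv z < 0"
  shows "sextic y < sextic x"
  using assms(1)
proof (rule DERIV_neg_imp_decreasing)
  show "\<exists>d. (sextic has_real_derivative d) (at z) \<and> d < 0" if "x \<le> z" "z \<le> y" for z
    using assms(2) that has_real_derivative_sextic by blast
qed

lemma sextic_strict_mono:
  assumes "x < y" "\<And>z. x \<le> z \<Longrightarrow> z \<le> y \<Longrightarrow> 0 < sextic_deriv z"
  shows "sextic x < sextic y"
  using assms(1)
proof (rule DERIV_pos_imp_increasing)
  show "\<exists>d. (sextic has_real_derivative d) (at z) \<and> 0 < d" if "x \<le> z" "z \<le> y" for z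
    using assms(2) that has_real_derivative_sextic by blast
qed

lemma inj_on_sextic: "inj_on sextic {..-100}" "inj_on sextic {-2..-3/2}" "inj_on sextic {1..3}"
proof -
  show "inj_on sextic {..-100}"
  proof (rule linorder_inj_onI')
    fix x y :: real assume "x \<in> {..-100}" "y \<in> {..-100}" "x < y"
    then have "sextic y < sextic x" by (intro sextic_strict_antimono sextic_deriv_neg_far) auto
    then show "sextic x \<noteq> sextic y" by simp
  qed
  show "inj_on sextic {-2..-3/2}"
  proof (rule linorder_inj_onI')
    fix x y :: real assume "x \<in> {-2..-3/2}" "y \<in> {-2..-3/2}" "x < y"
    then have "sextic x < sextic y" by (intro sextic_strict_mono sextic_deriv_pos_mid) auto
    then show "sextic x \<noteq> sextic y" by simp
  qed
  show "inj_on sextic {1..3}"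
  proof (rule linorder_inj_onI')
    fix x y :: real assume "x \<in> {1..3}" "y \<in> {1..3}" "x < y"
    then have "sextic y < sextic x" by (intro sextic_strict_antimono sextic_deriv_neg_1_3) auto
    then show "sextic x \<noteq> sextic y" by simp
  qed
qed

lemma sextic_zero_cases:
  assumes "sextic x = 0"
  shows "x \<le> -100 \<or> x \<in> {-2..-3/2} \<or> 1 < x"
  using assms sextic_neg_mid[of x] sextic_pos_mid[of x] by fastforce

lemma the_third_zero_eq:
  fixes f :: "'a::linorder \<Rightarrow> 'b::zero"
  assumes "r1 < r2" "r2 < r0" "f r0 = 0" and zeros: "{x. f x = 0 \<and> x < r0} = {r1, r2}"
  shows "(THE r. f r = 0 \<and> card {x. f x = 0 \<and> x < r} = 2) = r0"
proof (rule the_equality)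
  show "f r0 = 0 \<and> card {x. f x = 0 \<and> x < r0} = 2"
    unfolding zeros using assms(1,3) by simp
next
  fix r assume r: "f r = 0 \<and> card {x. f x = 0 \<and> x < r} = 2"
  show "r = r0"
  proof (rule linorder_cases[of r r0])
    assume "r < r0"
    then have below: "x \<in> {r1, r2}" if "f x = 0" "x \<le> r" for x
      using that by (simp flip: zeros)
    have "r \<le> r2"
      using below[of r] r \<open>r1 < r2\<close> by auto
    then have "{x. f x = 0 \<and> x < r} \<subseteq> {r1}"
      using below by fastforce
    then have "card {x. f x = 0 \<and> x < r} \<le> card {r1}"
      by (rule card_mono[rotated]) simp
    with r show ?thesis by simp
  next
    assume "r0 < r"
    have "{r1, r2} \<subseteq> {x. f x = 0 \<and> x < r}"
      unfolding zeros[symmetric] using \<open>r0 < r\<close> by auto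
    then have "{r1, r2, r0} \<subseteq> {x. f x = 0 \<and> x < r}"
      using \<open>r0 < r\<close> \<open>f r0 = 0\<close> by auto
    moreover have "finite {x. f x = 0 \<and> x < r}"
      using r by (intro card_ge_0_finite) simp
    ultimately have "card {r1, r2, r0} \<le> card {x. f x = 0 \<and> x < r}"
      by (intro card_mono)
    moreover have "card {r1, r2, r0} = 3"
      using assms(1,2) less_trans[OF assms(1,2)] by (simp add: order.strict_implies_not_eq)
    ultimately show ?thesis using r by simp
  qed
qed

lemma sextic_third_zero:
  obtains r1 r2 r0 where "r1 < r2" "r2 < r0" "1 < r0" "r0 < 3" "sextic r0 = 0"
    "{x. sextic x = 0 \<and> x < r0} = {r1, r2}"
proof -
  have cont: "continuous_on S sextic" for S
    unfolding sextic_def by (intro continuous_intros)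
  obtain r1 where r1: "-114 \<le> r1" "r1 \<le> -113" "sextic r1 = 0"
    using IVT2'[of sextic "-113" 0 "-114", OF _ _ _ cont] by (auto simp: sextic_def)
  obtain r2 where r2: "-2 \<le> r2" "r2 \<le> -3/2" "sextic r2 = 0"
    using IVT'[of sextic "-2" 0 "-3/2", OF _ _ _ cont] by (auto simp: sextic_def power_divide)
  obtain r0 where r0: "1 \<le> r0" "r0 \<le> 3" "sextic r0 = 0"
    using IVT2'[of sextic 3 0 1, OF _ _ _ cont] by (auto simp: sextic_def)
  have "sextic 1 \<noteq> 0" "sextic 3 \<noteq> 0"
    by (simp_all add: sextic_def)
  with r0 have r0': "1 < r0" "r0 < 3"
    by (metis order_le_less)+
  have "x \<in> {r1, r2}" if "sextic x = 0" "x < r0" for x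
    using sextic_zero_cases[OF that(1)]
  proof (elim disjE)
    assume "x \<le> -100"
    then show ?thesis
      using inj_onD[OF inj_on_sextic(1), of x r1] that r1 by simp
  next
    assume "x \<in> {-2..-3/2}"
    then show ?thesis
      using inj_onD[OF inj_on_sextic(2), of x r2] that r2 by simp
  next
    assume "1 < x"
    then show ?thesis
      using inj_onD[OF inj_on_sextic(3), of x r0] that r0 r0' by simp
  qed
  then have "{x. sextic x = 0 \<and> x < r0} = {r1, r2}"
    using r1 r2 r0' by auto
  moreover have "r1 < r2" "r2 < r0"
    using r1 r2 r0' by auto
  ultimately show ?thesis
    using that r0 r0' by blast
qed

lemma theta_star_root: "1 < theta_star" "theta_star < 3" "sextic theta_star = 0"
proof -
  obtain r1 r2 r0 where r: "r1 < r2" "r2 < r0" "1 < r0" "r0 < 3" "sextic r0 = 0"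
    "{x. sextic x = 0 \<and> x < r0} = {r1, r2}"
    by (rule sextic_third_zero)
  moreover have "theta_star = r0"
    unfolding theta_star_def by (rule the_third_zero_eq[OF r(1,2,5,6)])
  ultimately show "1 < theta_star" "theta_star < 3" "sextic theta_star = 0"
    by simp_all
qed

lemma sextic_nonneg_below_theta_star:
  assumes "1 \<le> x" "x \<le> theta_star"
  shows "0 \<le> sextic x"
proof (cases "x = theta_star")
  case False
  then have "sextic theta_star < sextic x"
    using assms theta_star_root by (intro sextic_strict_antimono sextic_deriv_neg_1_3) auto
  then show ?thesis using theta_star_root by simp
qed (simp add: theta_star_root)

lemma sextic_nonpos_above_theta_star:
  assumes "theta_star \<le> x" "x \<le> 3"
  shows "sextic x \<le> 0"
proof (cases "x = theta_star")
  case False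
  then have "sextic x < sextic theta_star"
    using assms theta_star_root by (intro sextic_strict_antimono sextic_deriv_neg_1_3) auto
  then show ?thesis using theta_star_root by simp
qed (simp add: theta_star_root)

section \<open>The optimal constant\<close>

lemma one_heavy_cap_le_two_heavy_cap:
  assumes "3 \<le> \<theta>"
  shows "one_heavy_cap \<theta> \<le> two_heavy_cap \<theta>"
proof -
  define u where "u = \<theta> + sqrt (\<theta>^2 - \<theta> + 1)"
  have u: "2 \<le> u" "\<theta> * (2*u - 1) = u^2 - 1"
    using two_heavy_param[of \<theta>] assms unfolding u_def by auto
  have "2^2 \<le> \<theta>^2 - \<theta> + 1"
    using assms mult_mono[of 3 \<theta> 2 "\<theta> - 1"] by (simp add: power2_eq_square algebra_simps)
  then have "5 \<le> u"
    using assms real_le_rsqrt unfolding u_def by fastforce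
  have "(2*u - 1)^2 * (216 * u^2 * (\<theta> + 1) * \<theta> - 27 * (\<theta> + 3) * ((2*u - 1) * (u + 1)^2))
      = 27 * (u + 1) * (1614 + 3837 * (u - 5) + 2438 * (u - 5)^2 + 667 * (u - 5)^3
          + 84 * (u - 5)^4 + 4 * (u - 5)^5)"
    using u(2) by algebra
  also have "\<dots> > 0"
    using \<open>5 \<le> u\<close> by (intro mult_pos_pos add_pos_nonneg mult_nonneg_nonneg zero_le_power) auto
  finally have "0 < 216 * u^2 * (\<theta> + 1) * \<theta> - 27 * (\<theta> + 3) * ((2*u - 1) * (u + 1)^2)"
    by (simp add: zero_less_mult_iff)
  then have le: "27 * (\<theta> + 3) * ((2*u - 1) * (u + 1)^2) \<le> 216 * u^2 * (\<theta> + 1) * \<theta>"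
    by linarith
  have "one_heavy_cap \<theta> = 27 * (\<theta> + 3) * ((2*u - 1) * (u + 1)^2) / (\<theta> * ((2*u - 1) * (u + 1)^2))"
    using assms u(1) by (cases "\<theta> = 3") (simp_all add: one_heavy_cap_def)
  also have "\<dots> \<le> 216 * u^2 * (\<theta> + 1) * \<theta> / (\<theta> * ((2*u - 1) * (u + 1)^2))"
    using assms u(1) le by (intro divide_right_mono) auto
  also have "\<dots> = two_heavy_cap \<theta>"
    unfolding two_heavy_cap_def Let_def u_def[symmetric] using assms by simp
  finally show ?thesis .
qed

definition sextic_cofactor :: "real \<Rightarrow> real" where
  "sextic_cofactor u = -16 + 200*u - 712*u^2 + 1050*u^3 - 715*u^4 + 224*u^5 + u^6"

lemma sextic_cofactor_pos:
  assumes "2 \<le> u"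
  shows "0 < sextic_cofactor u"
proof -
  have "sextic_cofactor u = 1728 + 5184 * (u - 2) + 6588 * (u - 2)^2 + 4450 * (u - 2)^3
      + 1585 * (u - 2)^4 + 236 * (u - 2)^5 + (u - 2)^6"
    unfolding sextic_cofactor_def by algebra
  also have "\<dots> > 0"
    using assms by (intro add_pos_nonneg mult_nonneg_nonneg zero_le_power) auto
  finally show ?thesis .
qed

text \<open>This is where the sextic comes from: up to a positive factor it is the difference of the
  two caps, written in u.\<close>
lemma sextic_eq_cap_difference:
  assumes "1 \<le> \<theta>" "\<theta> \<le> 3"
  defines "u \<equiv> \<theta> + sqrt (\<theta>^2 - \<theta> + 1)"
  shows "sextic \<theta> * ((2*u - 1)^6 * (u - 2)^2)
    = 4 * (2*u - 1)^3 * (u + 1)^2 * sextic_cofactor u * (one_heavy_cap \<theta> - two_heavy_cap \<theta>)"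
proof -
  have u: "2 \<le> u" "\<theta> * (2*u - 1) = u^2 - 1"
    using two_heavy_param[OF assms(1)] unfolding u_def by auto
  have one: "4 * one_heavy_cap \<theta> = (\<theta> + 3) * (9 - \<theta>)^2"
    using assms(2) by (simp add: one_heavy_cap_def)
  have two: "two_heavy_cap \<theta> * ((2*u - 1) * (u + 1)^2) = 216 * u^2 * (\<theta> + 1)"
    using u(1) unfolding two_heavy_cap_def Let_def u_def[symmetric] by simp
  have "sextic \<theta> * (2*u - 1)^6 = 3456 * (2*u - 1)^6 - 5184 * (\<theta> * (2*u - 1)) * (2*u - 1)^5
      + 3561 * (\<theta> * (2*u - 1))^2 * (2*u - 1)^4 + 596 * (\<theta> * (2*u - 1))^3 * (2*u - 1)^3
      - 1506 * (\<theta> * (2*u - 1))^4 * (2*u - 1)^2 + 100 * (\<theta> * (2*u - 1))^5 * (2*u - 1)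
      + (\<theta> * (2*u - 1))^6"
    unfolding sextic_def by algebra
  also have "\<dots> = 1024 - 15872*u + 88384*u^2 - 264192*u^3 + 508096*u^4 - 675248*u^5
      + 597136*u^6 - 312664*u^7 + 72929*u^8 + 9792*u^9 - 6130*u^10 + 200*u^11 + u^12"
    unfolding u(2) by algebra
  finally have "sextic \<theta> * ((2*u - 1)^6 * (u - 2)^2) = sextic_cofactor u
      * (-256 + 1024*u - 1936*u^2 + 2568*u^3 - 1704*u^4 + 378*u^5 + 61*u^6 - 28*u^7 + u^8)"
    unfolding sextic_cofactor_def by algebra
  also have "-256 + 1024*u - 1936*u^2 + 2568*u^3 - 1704*u^4 + 378*u^5 + 61*u^6 - 28*u^7 + u^8
      = 4 * (2*u - 1)^3 * (u + 1)^2 * (one_heavy_cap \<theta> - two_heavy_cap \<theta>)"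
    using one two u(2) by algebra
  finally show ?thesis
    by (simp add: ac_simps)
qed

lemma sextic_sign_compares_caps:
  assumes "1 \<le> \<theta>" "\<theta> \<le> 3"
  shows "sextic \<theta> \<le> 0 \<Longrightarrow> one_heavy_cap \<theta> \<le> two_heavy_cap \<theta>"
    and "0 \<le> sextic \<theta> \<Longrightarrow> two_heavy_cap \<theta> \<le> one_heavy_cap \<theta>"
proof -
  define u where "u = \<theta> + sqrt (\<theta>^2 - \<theta> + 1)"
  define d where "d = 4 * (2*u - 1)^3 * (u + 1)^2 * sextic_cofactor u"
  have "2 \<le> u"
    using two_heavy_param[OF assms(1)] unfolding u_def by auto
  then have c: "0 \<le> (2*u - 1)^6 * (u - 2)^2" and "0 < d"
    using sextic_cofactor_pos by (simp_all add: d_def)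
  have key: "sextic \<theta> * ((2*u - 1)^6 * (u - 2)^2) = d * (one_heavy_cap \<theta> - two_heavy_cap \<theta>)"
    unfolding d_def u_def by (rule sextic_eq_cap_difference[OF assms])
  show "one_heavy_cap \<theta> \<le> two_heavy_cap \<theta>" if "sextic \<theta> \<le> 0"
  proof -
    have "sextic \<theta> * ((2*u - 1)^6 * (u - 2)^2) \<le> 0"
      using that c by (rule mult_nonpos_nonneg)
    then show ?thesis
      unfolding key using \<open>0 < d\<close> by (simp add: mult_le_0_iff)
  qed
  show "two_heavy_cap \<theta> \<le> one_heavy_cap \<theta>" if "0 \<le> sextic \<theta>"
  proof -
    have "0 \<le> sextic \<theta> * ((2*u - 1)^6 * (u - 2)^2)"
      using that c by (rule mult_nonneg_nonneg)
    then show ?thesis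
      unfolding key using \<open>0 < d\<close> by (simp add: zero_le_mult_iff)
  qed
qed

text \<open>The minimum of (v_1 + v_2 + v_3 + v_4) / max_p L_v(p) over the box [1, \<theta>]^4.\<close>
definition worst_ratio :: "real \<Rightarrow> real" where
  "worst_ratio \<theta> = min (one_heavy_cap \<theta>) (two_heavy_cap \<theta>)"

lemma worst_ratio_pos: "1 \<le> \<theta> \<Longrightarrow> 0 < worst_ratio \<theta>"
  using one_heavy_cap_pos[of \<theta>] two_heavy_cap_pos[of \<theta>] by (simp add: worst_ratio_def)

lemma worst_ratio_corner_le:
  assumes "1 \<le> \<theta>" "e1 \<in> {1, \<theta>}" "e2 \<in> {1, \<theta>}" "e3 \<in> {1, \<theta>}" "e4 \<in> {1, \<theta>}" "p \<in> simplex4"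
  shows "worst_ratio \<theta> * Lv (e1, e2, e3, e4) p \<le> e1 + e2 + e3 + e4"
proof (rule Lv_corner_le[OF assms(1) _ _ _ _ _ assms(2-6)])
  have "worst_ratio \<theta> \<le> one_heavy_cap \<theta>" "one_heavy_cap \<theta> \<le> 64" "one_heavy_cap 1 = 64"
    using assms(1) one_heavy_cap_le_64[of \<theta>] by (simp_all add: worst_ratio_def one_heavy_cap_def)
  then show "worst_ratio \<theta> \<le> one_heavy_cap 1" "worst_ratio \<theta> \<le> one_heavy_cap \<theta>"
    "worst_ratio \<theta> \<le> one_heavy_cap (1/\<theta>)"
    using one_heavy_cap_le_inverse[OF assms(1)] by linarith+
  show "0 \<le> worst_ratio \<theta>" "worst_ratio \<theta> \<le> two_heavy_cap \<theta>"
    using worst_ratio_pos[OF assms(1)] by (simp_all add: worst_ratio_def)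
qed

lemma worst_ratio_box_le:
  assumes "1 \<le> \<theta>" "0 < a" "p \<in> simplex4"
    and v: "v1 \<in> {a..\<theta> * a}" "v2 \<in> {a..\<theta> * a}" "v3 \<in> {a..\<theta> * a}" "v4 \<in> {a..\<theta> * a}"
  shows "worst_ratio \<theta> * Lv (v1, v2, v3, v4) p \<le> v1 + v2 + v3 + v4"
proof (rule Lv_le_from_vertices[OF _ v])
  fix e1 e2 e3 e4
  assume "e1 \<in> {a, \<theta> * a}" "e2 \<in> {a, \<theta> * a}" "e3 \<in> {a, \<theta> * a}" "e4 \<in> {a, \<theta> * a}"
  then have "e1 / a \<in> {1, \<theta>}" "e2 / a \<in> {1, \<theta>}" "e3 / a \<in> {1, \<theta>}" "e4 / a \<in> {1, \<theta>}"
    using assms(2) by auto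
  then have "a * (worst_ratio \<theta> * Lv (e1 / a, e2 / a, e3 / a, e4 / a) p)
      \<le> a * (e1 / a + e2 / a + e3 / a + e4 / a)"
    using assms(2) worst_ratio_corner_le[OF assms(1) _ _ _ _ assms(3)] by simp
  moreover have "Lv (e1, e2, e3, e4) p = a * Lv (e1 / a, e2 / a, e3 / a, e4 / a) p"
    using Lv_scale[of a "e1 / a" "e2 / a" "e3 / a" "e4 / a"] assms(2) by simp
  ultimately show "worst_ratio \<theta> * Lv (e1, e2, e3, e4) p \<le> e1 + e2 + e3 + e4"
    using assms(2) by (simp add: algebra_simps)
qed

lemma worst_ratio_attained:
  assumes "1 \<le> \<theta>"
  obtains e1 e2 e3 e4 p where "e1 \<in> {1, \<theta>}" "e2 \<in> {1, \<theta>}" "e3 \<in> {1, \<theta>}" "e4 \<in> {1, \<theta>}"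
    "p \<in> simplex4" "worst_ratio \<theta> * Lv (e1, e2, e3, e4) p = e1 + e2 + e3 + e4"
proof (cases "one_heavy_cap \<theta> \<le> two_heavy_cap \<theta>")
  case True
  from assms have "0 \<le> \<theta>" by simp
  then obtain q where q: "0 \<le> q" "q \<le> 1/3"
    "one_heavy_cap \<theta> * Lv (\<theta>, 1, 1, 1) (1 - 3*q, q, q, q) = \<theta> + 3"
    by (rule one_heavy_cap_attained)
  show ?thesis
  proof (rule that)
    show "(1 - 3*q, q, q, q) \<in> simplex4"
      using q by (simp add: simplex4_def)
    show "worst_ratio \<theta> * Lv (\<theta>, 1, 1, 1) (1 - 3*q, q, q, q) = \<theta> + 1 + 1 + 1"
      using True q(3) by (simp add: worst_ratio_def)
  qed simp_all
next
  case False
  obtain y where y: "0 \<le> y" "y \<le> 1"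
    "two_heavy_cap \<theta> * Lv (\<theta>, \<theta>, 1, 1) ((1 - y)/2, (1 - y)/2, y/2, y/2) = 2*\<theta> + 2"
    using assms by (rule two_heavy_cap_attained)
  show ?thesis
  proof (rule that)
    show "((1 - y)/2, (1 - y)/2, y/2, y/2) \<in> simplex4"
      using y by (simp add: simplex4_def)
    show "worst_ratio \<theta> * Lv (\<theta>, \<theta>, 1, 1) ((1 - y)/2, (1 - y)/2, y/2, y/2) = \<theta> + \<theta> + 1 + 1"
      using False y(3) by (simp add: worst_ratio_def)
  qed simp_all
qed

lemma worst_ratio_eq_one_heavy_cap:
  assumes "theta_star \<le> \<theta>"
  shows "worst_ratio \<theta> = one_heavy_cap \<theta>"
proof (cases "3 \<le> \<theta>")
  case True
  then show ?thesis
    using one_heavy_cap_le_two_heavy_cap by (simp add: worst_ratio_def)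
next
  case False
  then have "sextic \<theta> \<le> 0"
    using assms by (intro sextic_nonpos_above_theta_star) auto
  then show ?thesis
    using False assms theta_star_root(1) sextic_sign_compares_caps(1)[of \<theta>]
    by (simp add: worst_ratio_def)
qed

lemma worst_ratio_eq_two_heavy_cap:
  assumes "1 \<le> \<theta>" "\<theta> \<le> theta_star"
  shows "worst_ratio \<theta> = two_heavy_cap \<theta>"
proof -
  have "0 \<le> sextic \<theta>"
    using assms by (rule sextic_nonneg_below_theta_star)
  then show ?thesis
    using assms theta_star_root(2) sextic_sign_compares_caps(2)[of \<theta>] by (simp add: worst_ratio_def)
qed

lemma two_heavy_cap_eq_rho:
  assumes "1 < \<theta>"
  defines "\<rho> \<equiv> sqrt (\<theta>^2 - \<theta> + 1)"
  shows "two_heavy_cap \<theta>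
    = 216 * ((\<theta> + 1) * (\<theta> - 1)^2 / ((2*\<theta> - 1 - \<rho>) * (\<theta> - 2 + \<rho>) * (\<theta> + 1 + \<rho>)))"
proof -
  define u where "u = \<theta> + \<rho>"
  have u: "2 \<le> u" "\<theta> * (2*u - 1) = u^2 - 1"
    using two_heavy_param[of \<theta>] assms unfolding u_def \<rho>_def by auto
  have "1 < \<theta>^2 - \<theta> + 1"
    using assms by (simp add: power2_eq_square)
  then have "1 < \<rho>" and \<rho>2: "\<rho>^2 = \<theta>^2 - \<theta> + 1"
    unfolding \<rho>_def by simp_all
  then have "u \<noteq> 2"
    using assms(1) unfolding u_def by simp
  define D where "D = (2*\<theta> - 1 - \<rho>) * (\<theta> - 2 + \<rho>) * (\<theta> + 1 + \<rho>)"
  have D: "D * (2*u - 1) = (u - 2)^2 * (u + 1)^2"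
    unfolding D_def u_def using \<rho>2 by algebra
  have "(2*u - 1) * ((\<theta> + 1) * (\<theta> - 1)^2 * ((2*u - 1) * (u + 1)^2))
      = (2*u - 1) * (u^2 * (\<theta> + 1) * D)"
    using u(2) D by algebra
  then have "(\<theta> + 1) * (\<theta> - 1)^2 * ((2*u - 1) * (u + 1)^2) = u^2 * (\<theta> + 1) * D"
    using u(1) by simp
  moreover have "D \<noteq> 0"
    using D u(1) \<open>u \<noteq> 2\<close> by auto
  ultimately have "(\<theta> + 1) * (\<theta> - 1)^2 / D = u^2 * (\<theta> + 1) / ((2*u - 1) * (u + 1)^2)"
    using u(1) by (simp add: frac_eq_eq)
  then show ?thesis
    unfolding two_heavy_cap_def Let_def u_def[unfolded \<rho>_def, symmetric] D_def[unfolded \<rho>_def]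
      \<rho>_def by simp
qed

lemma root_3_cubes: "root 3 27 = 3" "root 3 216 = 6" "root 3 64 = 4" "root 3 (1/8) = 1/2"
  by (rule real_root_pos_unique; simp add: power_divide)+

lemma Rmax_formula_one_heavy:
  assumes "theta_star \<le> \<theta>"
  shows "Rmax_formula \<theta> = 1 - root 3 (worst_ratio \<theta>) / 4"
proof (cases "3 \<le> \<theta>")
  case True
  then have "worst_ratio \<theta> = 27 * (1 + 3/\<theta>)"
    using worst_ratio_eq_one_heavy_cap[OF assms] by (cases "\<theta> = 3") (simp_all add: one_heavy_cap_def field_simps)
  then have "root 3 (worst_ratio \<theta>) = 3 * root 3 (1 + 3/\<theta>)"
    by (simp only: real_root_mult root_3_cubes)
  then show ?thesis
    using True by (simp add: Rmax_formula_def)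
next
  case False
  have "worst_ratio \<theta> = (\<theta> + 3) * (9 - \<theta>)^2 / 4"
    using False worst_ratio_eq_one_heavy_cap[OF assms] by (simp add: one_heavy_cap_def)
  also have "\<dots> = 1/8 * (2 * (\<theta> + 3) * (9 - \<theta>)^2)"
    by simp
  finally show ?thesis
    using False assms by (simp only: Rmax_formula_def real_root_mult root_3_cubes) simp
qed

lemma Rmax_formula_two_heavy:
  assumes "1 \<le> \<theta>" "\<theta> < theta_star"
  shows "Rmax_formula \<theta> = 1 - root 3 (worst_ratio \<theta>) / 4"
proof (cases "\<theta> = 1")
  case True
  then have "worst_ratio \<theta> = 64"
    using worst_ratio_eq_two_heavy_cap[of 1] theta_star_root(1) by (simp add: two_heavy_cap_def)
  then show ?thesis
    using True theta_star_root(1) by (simp add: Rmax_formula_def root_3_cubes)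
next
  case False
  define \<rho> where "\<rho> = sqrt (\<theta>^2 - \<theta> + 1)"
  have "worst_ratio \<theta>
      = 216 * ((\<theta> + 1) * (\<theta> - 1)^2 / ((2*\<theta> - 1 - \<rho>) * (\<theta> - 2 + \<rho>) * (\<theta> + 1 + \<rho>)))"
    using False assms worst_ratio_eq_two_heavy_cap[of \<theta>] two_heavy_cap_eq_rho[of \<theta>]
    unfolding \<rho>_def by simp
  then have "root 3 (worst_ratio \<theta>)
      = 6 * root 3 ((\<theta> + 1) * (\<theta> - 1)^2 / ((2*\<theta> - 1 - \<rho>) * (\<theta> - 2 + \<rho>) * (\<theta> + 1 + \<rho>)))"
    by (simp only: real_root_mult root_3_cubes)
  then show ?thesis
    using False assms theta_star_root(2) by (simp add: Rmax_formula_def Let_def \<rho>_def)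
qed

section \<open>Efficiency loss of the uniform design\<close>

lemma SUP_Lv_bounds:
  assumes "0 < K" "\<And>p. p \<in> simplex4 \<Longrightarrow> K * Lv v p \<le> S" "p0 \<in> simplex4"
  shows "Lv v p0 \<le> (SUP p\<in>simplex4. Lv v p)" "(SUP p\<in>simplex4. Lv v p) \<le> S / K"
proof -
  have bound: "Lv v p \<le> S / K" if "p \<in> simplex4" for p
    using assms(1) assms(2)[OF that] by (simp add: le_divide_eq mult.commute)
  show "Lv v p0 \<le> (SUP p\<in>simplex4. Lv v p)"
    using bound assms(3) by (intro cSUP_upper bdd_aboveI2) auto
  show "(SUP p\<in>simplex4. Lv v p) \<le> S / K"
    using bound assms(3) by (intro cSUP_least) auto
qed

lemma uniform_in_simplex4: "(1/4, 1/4, 1/4, 1/4) \<in> simplex4"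
  by (simp add: simplex4_def)

lemma Ru_le_of_bound:
  fixes w1 w2 w3 w4 :: real
  defines "S \<equiv> 1/w1 + 1/w2 + 1/w3 + 1/w4"
  assumes "0 < w1" "0 < w2" "0 < w3" "0 < w4" "0 < K"
    and bound: "\<And>p. p \<in> simplex4 \<Longrightarrow> K * Lv (1/w1, 1/w2, 1/w3, 1/w4) p \<le> S"
  shows "Ru (w1, w2, w3, w4) \<le> 1 - root 3 K / 4"
proof -
  define M where "M = (SUP p\<in>simplex4. Lv (1/w1, 1/w2, 1/w3, 1/w4) p)"
  have "S / 64 \<le> M" "M \<le> S / K"
    using SUP_Lv_bounds[OF \<open>0 < K\<close> bound uniform_in_simplex4]
    unfolding M_def S_def by (simp_all add: Lv_def)
  moreover have "0 < S"
    unfolding S_def using assms(2-5) by (intro add_pos_pos) auto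
  ultimately have "K \<le> S / M"
    using \<open>0 < K\<close> by (simp add: field_simps)
  then show ?thesis
    unfolding Ru_def M_def S_def Let_def by simp
qed

lemma Ru_eq_of_attained:
  fixes w1 w2 w3 w4 :: real
  defines "S \<equiv> 1/w1 + 1/w2 + 1/w3 + 1/w4"
  assumes "0 < w1" "0 < w2" "0 < w3" "0 < w4" "0 < K"
    and bound: "\<And>p. p \<in> simplex4 \<Longrightarrow> K * Lv (1/w1, 1/w2, 1/w3, 1/w4) p \<le> S"
    and "p1 \<in> simplex4" "K * Lv (1/w1, 1/w2, 1/w3, 1/w4) p1 = S"
  shows "Ru (w1, w2, w3, w4) = 1 - root 3 K / 4"
proof -
  define M where "M = (SUP p\<in>simplex4. Lv (1/w1, 1/w2, 1/w3, 1/w4) p)"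
  have "Lv (1/w1, 1/w2, 1/w3, 1/w4) p1 \<le> M" "M \<le> S / K"
    using SUP_Lv_bounds[OF \<open>0 < K\<close> bound \<open>p1 \<in> simplex4\<close>] unfolding M_def by simp_all
  moreover have "Lv (1/w1, 1/w2, 1/w3, 1/w4) p1 = S / K"
    using assms(6,9) by (simp add: field_simps)
  ultimately have "M = S / K"
    by simp
  moreover have "0 < S"
    unfolding S_def using assms(2-5) by (intro add_pos_pos) auto
  ultimately have "S / M = K"
    using \<open>0 < K\<close> by simp
  then show ?thesis
    unfolding Ru_def M_def S_def Let_def by simp
qed

lemma Ru_le_on_box:
  assumes "0 < \<alpha>" "\<alpha> \<le> \<beta>" "w \<in> box4 \<alpha> \<beta>"
  shows "Ru w \<le> 1 - root 3 (worst_ratio (\<beta>/\<alpha>)) / 4"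
proof -
  obtain w1 w2 w3 w4 where w: "w = (w1, w2, w3, w4)"
    by (cases w) auto
  have inv: "1/x \<in> {1/\<beta>..(\<beta>/\<alpha>) * (1/\<beta>)}" if "x \<in> {\<alpha>..\<beta>}" for x
    using that assms(1,2) by (auto simp: field_simps)
  have wb: "w1 \<in> {\<alpha>..\<beta>}" "w2 \<in> {\<alpha>..\<beta>}" "w3 \<in> {\<alpha>..\<beta>}" "w4 \<in> {\<alpha>..\<beta>}"
    using assms(3) unfolding w box4_def by auto
  have "1 \<le> \<beta>/\<alpha>" "0 < 1/\<beta>"
    using assms(1,2) by simp_all
  then show ?thesis
    unfolding w
  proof (intro Ru_le_of_bound worst_ratio_pos)
    fix p assume "p \<in> simplex4"
    show "worst_ratio (\<beta>/\<alpha>) * Lv (1/w1, 1/w2, 1/w3, 1/w4) p \<le> 1/w1 + 1/w2 + 1/w3 + 1/w4"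
      by (rule worst_ratio_box_le[OF \<open>1 \<le> \<beta>/\<alpha>\<close> \<open>0 < 1/\<beta>\<close> \<open>p \<in> simplex4\<close>])
        (use inv wb in blast)+
  qed (use assms(1) wb in auto)
qed

lemma Ru_attained_on_box:
  assumes "0 < \<alpha>" "\<alpha> \<le> \<beta>"
  obtains w where "w \<in> box4 \<alpha> \<beta>" "Ru w = 1 - root 3 (worst_ratio (\<beta>/\<alpha>)) / 4"
proof -
  define \<theta> where "\<theta> = \<beta>/\<alpha>"
  have "1 \<le> \<theta>" "0 < 1/\<beta>"
    using assms by (simp_all add: \<theta>_def)
  obtain e1 e2 e3 e4 p where e: "e1 \<in> {1, \<theta>}" "e2 \<in> {1, \<theta>}" "e3 \<in> {1, \<theta>}" "e4 \<in> {1, \<theta>}"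
    and p: "p \<in> simplex4" "worst_ratio \<theta> * Lv (e1, e2, e3, e4) p = e1 + e2 + e3 + e4"
    using worst_ratio_attained[OF \<open>1 \<le> \<theta>\<close>] by blast
  have corner: "\<beta> / x \<in> {\<alpha>..\<beta>}" "0 < \<beta> / x" "1 / (\<beta> / x) = (1/\<beta>) * x"
    "(1/\<beta>) * x \<in> {1/\<beta>..\<theta> * (1/\<beta>)}" if "x \<in> {1, \<theta>}" for x
    using that assms \<open>1 \<le> \<theta>\<close> by (auto simp: \<theta>_def field_simps)
  let ?w = "(\<beta> / e1, \<beta> / e2, \<beta> / e3, \<beta> / e4)"
  have "?w \<in> box4 \<alpha> \<beta>"
    unfolding box4_def using corner(1) e by auto
  moreover have "Ru ?w = 1 - root 3 (worst_ratio \<theta>) / 4"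
  proof (rule Ru_eq_of_attained)
    show "worst_ratio \<theta> * Lv (1 / (\<beta> / e1), 1 / (\<beta> / e2), 1 / (\<beta> / e3), 1 / (\<beta> / e4)) q
        \<le> 1 / (\<beta> / e1) + 1 / (\<beta> / e2) + 1 / (\<beta> / e3) + 1 / (\<beta> / e4)" if "q \<in> simplex4" for q
      unfolding corner(3)[OF e(1)] corner(3)[OF e(2)] corner(3)[OF e(3)] corner(3)[OF e(4)]
      by (rule worst_ratio_box_le[OF \<open>1 \<le> \<theta>\<close> \<open>0 < 1/\<beta>\<close> that]) (use corner(4) e in blast)+
    show "worst_ratio \<theta> * Lv (1 / (\<beta> / e1), 1 / (\<beta> / e2), 1 / (\<beta> / e3), 1 / (\<beta> / e4)) p
        = 1 / (\<beta> / e1) + 1 / (\<beta> / e2) + 1 / (\<beta> / e3) + 1 / (\<beta> / e4)"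
      unfolding corner(3)[OF e(1)] corner(3)[OF e(2)] corner(3)[OF e(3)] corner(3)[OF e(4)] Lv_scale
      using p(2) by (simp add: add_divide_distrib)
  qed (use e corner(2) worst_ratio_pos[OF \<open>1 \<le> \<theta>\<close>] p(1) in auto)
  ultimately show ?thesis
    using that unfolding \<theta>_def by blast
qed

theorem theorem4:
  fixes \<alpha> \<beta> :: real
  assumes "0 < \<alpha>" and "\<alpha> \<le> \<beta>"
  shows "(\<exists>w\<in>box4 \<alpha> \<beta>. Ru w = Rmax_formula (\<beta>/\<alpha>))
       \<and> (\<forall>w\<in>box4 \<alpha> \<beta>. Ru w \<le> Rmax_formula (\<beta>/\<alpha>))"
proof -
  have "Rmax_formula (\<beta>/\<alpha>) = 1 - root 3 (worst_ratio (\<beta>/\<alpha>)) / 4"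
    using assms Rmax_formula_one_heavy Rmax_formula_two_heavy by (cases "theta_star \<le> \<beta>/\<alpha>") auto
  moreover obtain w where "w \<in> box4 \<alpha> \<beta>" "Ru w = 1 - root 3 (worst_ratio (\<beta>/\<alpha>)) / 4"
    using Ru_attained_on_box[OF assms] .
  ultimately show ?thesis
    using Ru_le_on_box[OF assms] by auto
qed

end
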